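(* If $\boldsymbol x^*$ is a pure Nash equilibrium of $\mathcal L(n,S)$, then for every $y\in S$, \[ \min_{i\in N}d(x_i^*,y)\le\frac{2\Lambda}{n}, \] where $\Lambda=\lambda(S)$.
   Context: Network: $(V,E)$ is a finite connected graph with no vertex of degree $2$; each edge $e$ has a length $\lambda(e)>0$. $S$ is the metric measure space obtained by identifying each edge with a segment of length $\lambda(e)$, with length measure $\lambda$ and shortest-path distance $d$. Location game $\mathcal L(n,S)$ with players $N=\{1,\dots,n\}$: each player chooses a point of $S$. Consumers are distributed according to $\lambda$, and each shops at a closest occupied location. Consumers equidistant from several closest occupied locations are split equally among those locations, and the share of a location is split equally among the players located there. Payoff is the mass of consumers attracted. Nash equilibria are pure. *)

theory Defs
  imports "HOL-Analysis.Analysis"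
begin

text \<open>Vertices of type 'v (set V), edges of type 'e (set E); every
edge e joins src e and tgt e and has length len e > 0. Edges are parametrised from
src e (parameter 0) to tgt e (parameter len e).\<close>

text \<open>Points of the metric space S: either a vertex, or an interior point of an edge
at parameter t with 0 < t < len e. This realises the identification of edge
endpoints with vertices.\<close>
datatype ('v, 'e) point = Vert 'v | Inner 'e real

definition points :: "'v set \<Rightarrow> 'e set \<Rightarrow> ('e \<Rightarrow> real) \<Rightarrow> ('v, 'e) point set" where
  "points V E len = Vert ` V \<union> {Inner e t | e t. e \<in> E \<and> 0 < t \<and> t < len e}"

inductive reach :: "'e set \<Rightarrow> ('e \<Rightarrow> 'v) \<Rightarrow> ('e \<Rightarrow> 'v) \<Rightarrow> ('e \<Rightarrow> real)
    \<Rightarrow> 'v \<Rightarrow> 'v \<Rightarrow> real \<Rightarrow> bool"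
  for E src tgt len where
  reach_refl: "reach E src tgt len u u 0"
| reach_step: "e \<in> E \<Longrightarrow> (a = src e \<and> b = tgt e) \<or> (a = tgt e \<and> b = src e)
     \<Longrightarrow> reach E src tgt len b w L \<Longrightarrow> reach E src tgt len a w (len e + L)"

definition vdist :: "'e set \<Rightarrow> ('e \<Rightarrow> 'v) \<Rightarrow> ('e \<Rightarrow> 'v) \<Rightarrow> ('e \<Rightarrow> real) \<Rightarrow> 'v \<Rightarrow> 'v \<Rightarrow> real" where
  "vdist E src tgt len u w = Inf {L. reach E src tgt len u w L}"

fun ends :: "('e \<Rightarrow> 'v) \<Rightarrow> ('e \<Rightarrow> 'v) \<Rightarrow> ('e \<Rightarrow> real) \<Rightarrow> ('v, 'e) point \<Rightarrow> ('v \<times> real) set" where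
  "ends src tgt len (Vert v) = {(v, 0)}"
| "ends src tgt len (Inner e t) = {(src e, t), (tgt e, len e - t)}"

definition pdist :: "'e set \<Rightarrow> ('e \<Rightarrow> 'v) \<Rightarrow> ('e \<Rightarrow> 'v) \<Rightarrow> ('e \<Rightarrow> real)
    \<Rightarrow> ('v, 'e) point \<Rightarrow> ('v, 'e) point \<Rightarrow> real" where
  "pdist E src tgt len p q = Min
     ({a + vdist E src tgt len u w + b | u a w b. (u, a) \<in> ends src tgt len p \<and> (w, b) \<in> ends src tgt len q}
      \<union> {\<bar>s - t\<bar> | e s t. p = Inner e s \<and> q = Inner e t})"

definition degree :: "'e set \<Rightarrow> ('e \<Rightarrow> 'v) \<Rightarrow> ('e \<Rightarrow> 'v) \<Rightarrow> 'v \<Rightarrow> nat" where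
  "degree E src tgt v = card {e \<in> E. src e = v} + card {e \<in> E. tgt e = v}"

definition network :: "'v set \<Rightarrow> 'e set \<Rightarrow> ('e \<Rightarrow> 'v) \<Rightarrow> ('e \<Rightarrow> 'v) \<Rightarrow> ('e \<Rightarrow> real) \<Rightarrow> bool" where
  "network V E src tgt len \<longleftrightarrow>
     finite V \<and> finite E \<and>
     (\<forall>e\<in>E. src e \<in> V \<and> tgt e \<in> V \<and> src e \<noteq> tgt e \<and> 0 < len e) \<and>
     (\<forall>e\<in>E. \<forall>f\<in>E. {src e, tgt e} = {src f, tgt f} \<longrightarrow> e = f) \<and>
     (\<forall>u\<in>V. \<forall>w\<in>V. \<exists>L. reach E src tgt len u w L) \<and>
     (\<forall>v\<in>V. degree E src tgt v \<noteq> 2)"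

definition total_length :: "'e set \<Rightarrow> ('e \<Rightarrow> real) \<Rightarrow> real" where
  "total_length E len = (\<Sum>e\<in>E. len e)"

text \<open>Players are N = {1..n}; a profile is x :: nat => point.
Closest occupied locations to consumer p:\<close>
definition closest :: "'e set \<Rightarrow> ('e \<Rightarrow> 'v) \<Rightarrow> ('e \<Rightarrow> 'v) \<Rightarrow> ('e \<Rightarrow> real) \<Rightarrow> nat
    \<Rightarrow> (nat \<Rightarrow> ('v, 'e) point) \<Rightarrow> ('v, 'e) point \<Rightarrow> ('v, 'e) point set" where
  "closest E src tgt len n x p =
     {l \<in> x ` {1..n}. \<forall>l' \<in> x ` {1..n}. pdist E src tgt len p l \<le> pdist E src tgt len p l'}"

definition share :: "'e set \<Rightarrow> ('e \<Rightarrow> 'v) \<Rightarrow> ('e \<Rightarrow> 'v) \<Rightarrow> ('e \<Rightarrow> real) \<Rightarrow> nat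
    \<Rightarrow> (nat \<Rightarrow> ('v, 'e) point) \<Rightarrow> nat \<Rightarrow> ('v, 'e) point \<Rightarrow> real" where
  "share E src tgt len n x i p =
     (if x i \<in> closest E src tgt len n x p
      then 1 / (real (card (closest E src tgt len n x p)) * real (card {j \<in> {1..n}. x j = x i}))
      else 0)"

text \<open>Payoff: mass (w.r.t. length measure) of consumers attracted by player i.
Vertices have measure zero, so the measure is the sum over edges of the
Lebesgue integral along the edge.\<close>
definition payoff :: "'e set \<Rightarrow> ('e \<Rightarrow> 'v) \<Rightarrow> ('e \<Rightarrow> 'v) \<Rightarrow> ('e \<Rightarrow> real) \<Rightarrow> nat
    \<Rightarrow> (nat \<Rightarrow> ('v, 'e) point) \<Rightarrow> nat \<Rightarrow> real" where
  "payoff E src tgt len n x i =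
     (\<Sum>e\<in>E. LBINT t=0..len e. share E src tgt len n x i (Inner e t))"

definition nash_eq :: "'v set \<Rightarrow> 'e set \<Rightarrow> ('e \<Rightarrow> 'v) \<Rightarrow> ('e \<Rightarrow> 'v) \<Rightarrow> ('e \<Rightarrow> real) \<Rightarrow> nat
    \<Rightarrow> (nat \<Rightarrow> ('v, 'e) point) \<Rightarrow> bool" where
  "nash_eq V E src tgt len n x \<longleftrightarrow>
     (\<forall>i\<in>{1..n}. x i \<in> points V E len) \<and>
     (\<forall>i\<in>{1..n}. \<forall>y\<in>points V E len.
        payoff E src tgt len n (x(i := y)) i \<le> payoff E src tgt len n x i)"

end

theory Submission
  imports Defs
begin

text \<open>Suppose every player is farther than \<open>2\<Lambda>/n\<close> from \<open>y\<close> and let \<open>\<rho>\<close> be half the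
  smallest of these distances, so \<open>\<rho> > \<Lambda>/n\<close>. Some player earns at most the average payoff
  \<open>\<Lambda>/n\<close>. If she moves to \<open>y\<close>, she becomes the only closest location of every consumer within
  distance \<open>\<rho>\<close> of \<open>y\<close>, and these consumers have mass at least \<open>\<rho>\<close>: a shortest path from \<open>y\<close>
  towards her old location, at distance at least \<open>2\<rho>\<close>, runs through distinct edges whose
  parts inside the ball have total length \<open>\<rho>\<close>. The deviation is profitable, a contradiction.\<close>

definition joins :: "('e \<Rightarrow> 'v) \<Rightarrow> ('e \<Rightarrow> 'v) \<Rightarrow> 'e \<Rightarrow> 'v \<Rightarrow> 'v \<Rightarrow> bool" where
  "joins src tgt e a b \<longleftrightarrow> (a = src e \<and> b = tgt e) \<or> (a = tgt e \<and> b = src e)"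

lemma sum_fun_upd:
  "finite A \<Longrightarrow> a \<in> A \<Longrightarrow> sum (f(a := c)) A = sum f A - f a + (c :: 'a :: ab_group_add)"
  by (simp add: sum.remove)

locale metric_network =
  fixes V :: "'v set" and E :: "'e set" and src tgt :: "'e \<Rightarrow> 'v" and len :: "'e \<Rightarrow> real"
  assumes network: "network V E src tgt len"
begin

abbreviation "walk \<equiv> reach E src tgt len"
abbreviation "vd \<equiv> vdist E src tgt len"
abbreviation "d \<equiv> pdist E src tgt len"

lemma finite_vertices: "finite V"
  and finite_edges: "finite E"
  and edge_wf: "e \<in> E \<Longrightarrow> src e \<in> V \<and> tgt e \<in> V \<and> src e \<noteq> tgt e \<and> 0 < len e"
  and connected: "u \<in> V \<Longrightarrow> w \<in> V \<Longrightarrow> \<exists>L. walk u w L"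
  using network unfolding network_def by auto

lemma joins_vertices: "e \<in> E \<Longrightarrow> joins src tgt e a b \<Longrightarrow> a \<in> V \<and> b \<in> V"
  using edge_wf by (auto simp: joins_def)

lemma total_length_nonneg: "0 \<le> total_length E len"
  unfolding total_length_def using edge_wf by (simp add: less_imp_le sum_nonneg)

subsection \<open>Walks and the vertex distance\<close>

lemma walk_nonneg: "walk a b L \<Longrightarrow> 0 \<le> L"
  by (induction rule: reach.induct) (auto dest: edge_wf)

lemma walk_append: "walk a b L1 \<Longrightarrow> walk b c L2 \<Longrightarrow> walk a c (L1 + L2)"
proof (induction arbitrary: L2 rule: reach.induct)
  case (reach_refl u)
  then show ?case by simp
next
  case (reach_step e a b w L)
  then have "walk a c (len e + (L + L2))" by (intro reach.reach_step) auto
  then show ?case by (simp add: add.assoc)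
qed

lemma walk_edge:
  assumes "e \<in> E" "joins src tgt e a b"
  shows "walk a b (len e)"
  using reach.reach_step[OF assms(1) _ reach.reach_refl] assms(2) by (simp add: joins_def)

lemma walk_reverse: "walk a b L \<Longrightarrow> walk b a L"
proof (induction rule: reach.induct)
  case (reach_refl u)
  then show ?case by (rule reach.reach_refl)
next
  case (reach_step e a b w L)
  then have "walk b a (len e)" by (intro walk_edge) (auto simp: joins_def)
  from walk_append[OF reach_step.IH this] show ?case by (simp add: add.commute)
qed

lemma bdd_below_walk_lengths: "bdd_below {L. walk u w L}"
  by (rule bdd_belowI[of _ 0]) (auto dest: walk_nonneg)

lemma vdist_le_walk: "walk u w L \<Longrightarrow> vd u w \<le> L"
  unfolding vdist_def by (rule cInf_lower) (auto simp: bdd_below_walk_lengths)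

lemma vdist_greatest: "u \<in> V \<Longrightarrow> w \<in> V \<Longrightarrow> (\<And>L. walk u w L \<Longrightarrow> c \<le> L) \<Longrightarrow> c \<le> vd u w"
  unfolding vdist_def using connected[of u w] by (intro cInf_greatest) auto

lemma vdist_nonneg: "u \<in> V \<Longrightarrow> w \<in> V \<Longrightarrow> 0 \<le> vd u w"
  by (rule vdist_greatest) (auto dest: walk_nonneg)

lemma vdist_self: "u \<in> V \<Longrightarrow> vd u u = 0"
  using vdist_le_walk[OF reach.reach_refl, of u] vdist_nonneg[of u u] by auto

lemma vdist_commute: "vd u w = vd w u"
proof -
  have "Collect (walk u w) = Collect (walk w u)" by (auto intro: walk_reverse)
  then show ?thesis unfolding vdist_def by simp
qed

lemma vdist_triangle:
  assumes "u \<in> V" "v \<in> V" "w \<in> V"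
  shows "vd u w \<le> vd u v + vd v w"
proof -
  have "vd u w - vd v w \<le> vd u v"
  proof (rule vdist_greatest[OF assms(1,2)])
    fix L1 assume L1: "walk u v L1"
    have "vd u w - L1 \<le> vd v w"
    proof (rule vdist_greatest[OF assms(2,3)])
      fix L2 assume "walk v w L2"
      from vdist_le_walk[OF walk_append[OF L1 this]] show "vd u w - L1 \<le> L2" by simp
    qed
    then show "vd u w - vd v w \<le> L1" by simp
  qed
  then show ?thesis by simp
qed

lemma vdist_le_edge: "e \<in> E \<Longrightarrow> joins src tgt e a b \<Longrightarrow> vd a b \<le> len e"
  by (rule vdist_le_walk[OF walk_edge])

lemma vdist_first_edge:
  assumes "v \<in> V" "w \<in> V" "v \<noteq> w"
  shows "\<exists>e\<in>E. \<exists>c. joins src tgt e v c \<and> vd v w = len e + vd c w"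
proof -
  define other where "other e = (if src e = v then tgt e else src e)" for e
  define A where "A = {e\<in>E. src e = v \<or> tgt e = v}"
  define M where "M = (\<lambda>e. len e + vd (other e) w) ` A"
  have joins_other: "e \<in> A \<Longrightarrow> joins src tgt e v (other e)" for e
    unfolding A_def other_def joins_def using edge_wf[of e] by auto
  have "finite M" unfolding M_def A_def using finite_edges by auto
  obtain L where "walk v w L" using connected assms by blast
  then have "A \<noteq> {}"
    using assms(3) by (cases rule: reach.cases) (auto simp: A_def)
  then have "Min M \<in> M" using \<open>finite M\<close> unfolding M_def by simp
  then obtain e where e: "e \<in> A" "Min M = len e + vd (other e) w" unfolding M_def by auto
  have eE: "e \<in> E" using e(1) by (simp add: A_def)
  have "vd v w \<le> vd v (other e) + vd (other e) w"
    using vdist_triangle assms joins_vertices[OF eE joins_other[OF e(1)]] by blast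
  also have "\<dots> \<le> Min M" using vdist_le_edge[OF eE joins_other[OF e(1)]] e(2) by simp
  finally have "vd v w \<le> Min M" .
  moreover have "Min M \<le> vd v w"
  proof (rule vdist_greatest[OF assms(1,2)])
    fix L assume "walk v w L"
    then show "Min M \<le> L"
    proof (cases rule: reach.cases)
      case reach_refl
      then show ?thesis using assms(3) by simp
    next
      case (reach_step e' b L')
      then have "e' \<in> A" "b = other e'" using edge_wf[of e'] by (auto simp: A_def other_def)
      then have "Min M \<le> len e' + vd b w" using \<open>finite M\<close> unfolding M_def by (intro Min_le) auto
      also have "\<dots> \<le> len e' + L'" using vdist_le_walk reach_step by simp
      finally show ?thesis using reach_step by simp
    qed
  qed
  ultimately show ?thesis
    using e eE joins_other[OF e(1)] by (intro bexI[of _ e] exI[of _ "other e"]) auto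
qed

subsection \<open>The distance on the network\<close>

text \<open>Unlike \<open>points\<close>, this admits the edge parameters \<open>0\<close> and \<open>len e\<close>, which name
  the endpoints a second time; the triangle inequality needs them.\<close>
definition closed_point :: "('v, 'e) point \<Rightarrow> bool" where
  "closed_point p = (case p of Vert v \<Rightarrow> v \<in> V | Inner e t \<Rightarrow> e \<in> E \<and> 0 \<le> t \<and> t \<le> len e)"

lemma closed_point_Inner: "e \<in> E \<Longrightarrow> 0 \<le> t \<Longrightarrow> t \<le> len e \<Longrightarrow> closed_point (Inner e t)"
  by (simp add: closed_point_def)

lemma closed_point_Vert: "v \<in> V \<Longrightarrow> closed_point (Vert v)"
  by (simp add: closed_point_def)

lemma closed_point_points: "p \<in> points V E len \<Longrightarrow> closed_point p"
  unfolding points_def closed_point_def by auto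

lemma closed_point_ends: "closed_point p \<Longrightarrow> (u, a) \<in> ends src tgt len p \<Longrightarrow> u \<in> V \<and> 0 \<le> a"
  by (cases p) (auto simp: closed_point_def dest: edge_wf)

lemma ends_nonempty: "ends src tgt len p \<noteq> {}"
  by (cases p) auto

definition pdist_candidates :: "('v, 'e) point \<Rightarrow> ('v, 'e) point \<Rightarrow> real set" where
  "pdist_candidates p q =
     {a + vd u w + b | u a w b. (u, a) \<in> ends src tgt len p \<and> (w, b) \<in> ends src tgt len q}
     \<union> {\<bar>s - t\<bar> | e s t. p = Inner e s \<and> q = Inner e t}"

lemma pdist_eq_Min: "d p q = Min (pdist_candidates p q)"
  unfolding pdist_def pdist_candidates_def ..

lemma finite_pdist_candidates: "finite (pdist_candidates p q)"
proof -
  have "{a + vd u w + b | u a w b. (u, a) \<in> ends src tgt len p \<and> (w, b) \<in> ends src tgt len q}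
     = (\<lambda>((u, a), (w, b)). a + vd u w + b) ` (ends src tgt len p \<times> ends src tgt len q)"
    by force
  moreover have "finite (ends src tgt len p \<times> ends src tgt len q)"
    by (cases p; cases q) auto
  moreover have "finite {\<bar>s - t\<bar> | e s t. p = Inner e s \<and> q = Inner e t}"
    by (cases p; cases q) auto
  ultimately show ?thesis unfolding pdist_candidates_def by simp
qed

lemma pdist_le_ends:
  "(u, a) \<in> ends src tgt len p \<Longrightarrow> (w, b) \<in> ends src tgt len q \<Longrightarrow> d p q \<le> a + vd u w + b"
  unfolding pdist_eq_Min
  by (rule Min_le[OF finite_pdist_candidates]) (auto simp: pdist_candidates_def)

lemma pdist_le_same_edge: "d (Inner e s) (Inner e t) \<le> \<bar>s - t\<bar>"
  unfolding pdist_eq_Min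
  by (rule Min_le[OF finite_pdist_candidates]) (auto simp: pdist_candidates_def)

lemma pdist_cases:
  obtains u a w b where "(u, a) \<in> ends src tgt len p" "(w, b) \<in> ends src tgt len q"
    "d p q = a + vd u w + b"
  | e s t where "p = Inner e s" "q = Inner e t" "d p q = \<bar>s - t\<bar>"
proof -
  have "pdist_candidates p q \<noteq> {}"
    using ends_nonempty[of p] ends_nonempty[of q] unfolding pdist_candidates_def by fast
  then have "d p q \<in> pdist_candidates p q"
    unfolding pdist_eq_Min using finite_pdist_candidates by simp
  then show ?thesis using that unfolding pdist_candidates_def by blast
qed

lemma pdist_commute: "d p q = d q p"
proof -
  have "pdist_candidates p q = pdist_candidates q p" unfolding pdist_candidates_def
    by (auto simp: vdist_commute;
        metis (no_types, opaque_lifting) abs_minus_commute add.commute vdist_commute)+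
  then show ?thesis unfolding pdist_eq_Min by simp
qed

lemma vdist_ends_le:
  assumes "closed_point q" "(w, b) \<in> ends src tgt len q" "(w', b') \<in> ends src tgt len q"
  shows "vd w w' \<le> b + b'"
proof (cases q)
  case (Vert v)
  then show ?thesis using assms by (auto simp: closed_point_def vdist_self)
next
  case (Inner e s)
  then have e: "e \<in> E" "0 \<le> s" "s \<le> len e" using assms(1) by (auto simp: closed_point_def)
  then show ?thesis
    using assms(2,3) Inner vdist_le_edge[OF e(1), of "src e" "tgt e"]
      vdist_le_edge[OF e(1), of "tgt e" "src e"] edge_wf[OF e(1)]
      vdist_self[of "src e"] vdist_self[of "tgt e"]
    by (auto simp: joins_def)
qed

lemma ends_Inner_shift:
  "(w, b) \<in> ends src tgt len (Inner e t) \<Longrightarrow>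
     \<exists>b'. (w, b') \<in> ends src tgt len (Inner e s) \<and> b' \<le> \<bar>s - t\<bar> + b"
  by auto

lemma pdist_triangle:
  assumes p: "closed_point p" and q: "closed_point q" and r: "closed_point r"
  shows "d p r \<le> d p q + d q r"
proof (cases p q rule: pdist_cases)
  case pq: (1 u a w b)
  show ?thesis
  proof (cases q r rule: pdist_cases)
    case qr: (1 w' b' z c)
    have V: "u \<in> V" "w \<in> V" "w' \<in> V" "z \<in> V"
      using closed_point_ends p q r pq qr by blast+
    have "vd u z \<le> vd u w + vd w w' + vd w' z"
      using vdist_triangle[OF V(1,2,4)] vdist_triangle[OF V(2,3,4)] by simp
    then have "vd u z \<le> vd u w + b + b' + vd w' z"
      using vdist_ends_le[OF q pq(2) qr(1)] by simp
    then show ?thesis using pdist_le_ends[OF pq(1) qr(2)] pq qr by simp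
  next
    case qr: (2 e t t')
    then obtain b'' where "(w, b'') \<in> ends src tgt len r" "b'' \<le> \<bar>t' - t\<bar> + b"
      using ends_Inner_shift pq(2) by blast
    then show ?thesis
      using pdist_le_ends[OF pq(1)] pq qr by (fastforce simp: abs_minus_commute)
  qed
next
  case pq: (2 e s t)
  show ?thesis
  proof (cases q r rule: pdist_cases)
    case qr: (1 w b z c)
    then obtain b'' where "(w, b'') \<in> ends src tgt len p" "b'' \<le> \<bar>s - t\<bar> + b"
      using ends_Inner_shift pq by blast
    then show ?thesis using pdist_le_ends[OF _ qr(2)] pq qr by fastforce
  next
    case qr: (2 e' t' t'')
    then have "d p r \<le> \<bar>s - t''\<bar>" using pdist_le_same_edge pq by auto
    then show ?thesis using pq qr by auto
  qed
qed

lemma pdist_nonneg: "closed_point p \<Longrightarrow> closed_point q \<Longrightarrow> 0 \<le> d p q"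
  by (cases p q rule: pdist_cases)
     (use closed_point_ends vdist_nonneg in \<open>auto intro!: add_nonneg_nonneg\<close>)

lemma pdist_along_edge_lipschitz:
  assumes "closed_point q" "e \<in> E"
  shows "1-lipschitz_on {0..len e} (\<lambda>t. d (Inner e t) q)"
proof (rule lipschitz_onI)
  fix s t assume "s \<in> {0..len e}" "t \<in> {0..len e}"
  then have s: "closed_point (Inner e s)" and t: "closed_point (Inner e t)"
    using assms(2) by (auto intro: closed_point_Inner)
  have "d (Inner e s) q \<le> \<bar>s - t\<bar> + d (Inner e t) q"
    using pdist_triangle[OF s t assms(1)] pdist_le_same_edge[of e s t] by simp
  moreover have "d (Inner e t) q \<le> \<bar>s - t\<bar> + d (Inner e s) q"
    using pdist_triangle[OF t s assms(1)] pdist_le_same_edge[of e t s] by (simp add: abs_minus_commute)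
  ultimately show "dist (d (Inner e s) q) (d (Inner e t) q) \<le> 1 * dist s t"
    by (simp add: dist_real_def abs_le_iff)
qed simp

text \<open>Clamping extends the distance to the consumers of an edge to a continuous function on
  the whole real line, which agrees with it on the edge.\<close>
lemma pdist_along_edge_measurable:
  assumes "closed_point q" "e \<in> E"
  shows "(\<lambda>t. d (Inner e (clamp 0 (len e) t)) q) \<in> borel_measurable borel"
proof -
  have "continuous_on (cbox 0 (len e)) (\<lambda>t. d (Inner e t) q)"
    using lipschitz_on_continuous_on[OF pdist_along_edge_lipschitz[OF assms]] by simp
  then show ?thesis
    by (intro borel_measurable_continuous_onI clamp_continuous_on)
qed

end

subsection \<open>Measure of a ball\<close>

locale ball_around = metric_network V E src tgt len
  for V :: "'v set" and E :: "'e set" and src tgt :: "'e \<Rightarrow> 'v" and len :: "'e \<Rightarrow> real" +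
  fixes y :: "('v, 'e) point" and \<rho> :: real
  assumes centre: "y \<in> points V E len" and radius: "0 < \<rho>"
begin

definition dy :: "'v \<Rightarrow> real" where
  "dy v = d (Vert v) y"

text \<open>If \<open>ball_segments l\<close>, the open ball of radius \<open>\<rho>\<close> around \<open>y\<close> has measure at least
  \<open>\<Sum>e\<in>E. l e\<close>.\<close>
definition ball_segment :: "'e \<Rightarrow> real \<Rightarrow> bool" where
  "ball_segment e l \<longleftrightarrow> 0 \<le> l \<and>
     (\<exists>a. 0 \<le> a \<and> a + l \<le> len e \<and> (\<forall>t. a < t \<and> t < a + l \<longrightarrow> d (Inner e t) y < \<rho>))"

definition ball_segments :: "('e \<Rightarrow> real) \<Rightarrow> bool" where
  "ball_segments l \<longleftrightarrow> (\<forall>e\<in>E. ball_segment e (l e))"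

definition on_centre_edge :: "'e \<Rightarrow> bool" where
  "on_centre_edge e \<longleftrightarrow> (\<exists>s. y = Inner e s)"

text \<open>Every used edge other than the one carrying \<open>y\<close> lies entirely within distance
  \<open>dy v\<close> of \<open>y\<close>; this keeps the edges of a shortest path towards \<open>v\<close> unused.\<close>
definition segments_below :: "'v \<Rightarrow> ('e \<Rightarrow> real) \<Rightarrow> bool" where
  "segments_below v l \<longleftrightarrow> (\<forall>e\<in>E. 0 < l e \<longrightarrow>
     on_centre_edge e \<or> (\<exists>u c. joins src tgt e u c \<and> dy u + len e \<le> dy v))"

lemma centre_closed: "closed_point y"
  using closed_point_points centre .

lemma dy_nonneg: "v \<in> V \<Longrightarrow> 0 \<le> dy v"
  unfolding dy_def using pdist_nonneg centre_closed by (simp add: closed_point_Vert)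

lemma dy_le_end: "(w, b) \<in> ends src tgt len y \<Longrightarrow> dy w \<le> b"
  unfolding dy_def
  using pdist_le_ends[of w 0 "Vert w" w b y] vdist_self closed_point_ends[OF centre_closed] by auto

lemma pdist_end_le: "(w, b) \<in> ends src tgt len p \<Longrightarrow> closed_point p \<Longrightarrow> d p y \<le> b + dy w"
  unfolding dy_def
  using pdist_triangle[of p "Vert w" y] pdist_le_ends[of w b p w 0 "Vert w"]
    closed_point_ends[of p w b] vdist_self[of w] centre_closed
  by (auto simp: closed_point_Vert)

lemma dy_cases:
  assumes "v \<in> V"
  obtains b where "(v, b) \<in> ends src tgt len y" "dy v = b"
  | e c where "e \<in> E" "joins src tgt e v c" "dy v = len e + dy c"
proof (cases "Vert v :: ('v, 'e) point" y rule: pdist_cases)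
  case (1 u a w b)
  then have "u = v" "a = 0" by auto
  have wV: "w \<in> V" using closed_point_ends[OF centre_closed 1(2)] by simp
  show ?thesis
  proof (cases "v = w")
    case True
    then show ?thesis using that(1) 1 \<open>u = v\<close> \<open>a = 0\<close> vdist_self[OF assms] unfolding dy_def by auto
  next
    case False
    obtain e c where e: "e \<in> E" "joins src tgt e v c" "vd v w = len e + vd c w"
      using vdist_first_edge[OF assms wV False] by blast
    have cV: "c \<in> V" using joins_vertices[OF e(1,2)] by simp
    have "dy c \<le> 0 + vd c w + b" unfolding dy_def by (rule pdist_le_ends) (use 1 in auto)
    then have "len e + dy c \<le> dy v" using 1 \<open>u = v\<close> \<open>a = 0\<close> e unfolding dy_def by simp
    moreover have "dy v \<le> len e + dy c"
      using pdist_end_le[of c "len e" "Vert v"] assms vdist_le_edge[OF e(1,2)]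
        pdist_le_ends[of v 0 "Vert v" c 0 "Vert c"] pdist_triangle[of "Vert v" "Vert c" y]
        centre_closed cV
      unfolding dy_def by (simp add: closed_point_Vert)
    ultimately show ?thesis using that(2)[OF e(1,2)] by simp
  qed
next
  case (2 e s t)
  then show ?thesis by simp
qed

lemma dy_lt_across_centre_edge:
  assumes "y = Inner e s" "joins src tgt e v c"
  shows "dy v < len e + dy c"
proof -
  have "e \<in> E" "0 < s" "s < len e" using centre assms(1) by (auto simp: points_def)
  have "(v, s) \<in> ends src tgt len y \<or> (v, len e - s) \<in> ends src tgt len y"
    using assms by (auto simp: joins_def)
  then obtain b where "(v, b) \<in> ends src tgt len y" "b < len e"
    using \<open>0 < s\<close> \<open>s < len e\<close> by auto
  then show ?thesis
    using dy_le_end dy_nonneg[of c] joins_vertices[OF \<open>e \<in> E\<close> assms(2)] by fastforce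
qed

lemma ball_segment_zero: "e \<in> E \<Longrightarrow> ball_segment e 0"
  unfolding ball_segment_def using edge_wf[of e] by (intro conjI exI[of _ 0]) auto

lemma ball_segment_near_centre:
  assumes "y = Inner e s" "0 \<le> a" "0 \<le> l" "a + l \<le> len e" "s - \<rho> \<le> a" "a + l \<le> s + \<rho>"
  shows "ball_segment e l"
proof -
  have "d (Inner e t) y < \<rho>" if "a < t" "t < a + l" for t
    using pdist_le_same_edge[of e t s] assms(1,5,6) that by auto
  then show ?thesis unfolding ball_segment_def using assms(2-4) by blast
qed

lemma ball_segment_from_end:
  assumes "e \<in> E" "joins src tgt e c c'" "0 \<le> m" "m \<le> len e" "dy c + m \<le> \<rho>"
  shows "ball_segment e m"
proof (cases "c = src e")
  case True
  have "d (Inner e t) y < \<rho>" if "0 < t" "t < m" for t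
    using pdist_end_le[of "src e" t "Inner e t"] closed_point_Inner[OF assms(1), of t] assms that True
    by force
  then show ?thesis using assms unfolding ball_segment_def by (intro conjI exI[of _ 0]) auto
next
  case False
  then have "c = tgt e" using assms(2) by (auto simp: joins_def)
  have "d (Inner e t) y < \<rho>" if "len e - m < t" "t < len e" for t
    using pdist_end_le[of "tgt e" "len e - t" "Inner e t"] closed_point_Inner[OF assms(1), of t]
      assms that \<open>c = tgt e\<close>
    by force
  then show ?thesis using assms unfolding ball_segment_def by (intro conjI exI[of _ "len e - m"]) auto
qed

lemma ball_segments_extend:
  assumes "ball_segments l" "l e = 0" "e \<in> E" "joins src tgt e c c'"
    "0 \<le> m" "m \<le> len e" "dy c + m \<le> \<rho>"
  shows "ball_segments (l(e := m))" "sum (l(e := m)) E = sum l E + m"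
  using assms(1) ball_segment_from_end[OF assms(3-7)] unfolding ball_segments_def apply simp
  using sum_fun_upd[OF finite_edges assms(3), of l m] assms(2) by simp

lemma ball_segments_centre_end:
  assumes "(v, b) \<in> ends src tgt len y"
  shows "\<exists>l. ball_segments l \<and> segments_below v l \<and> min b \<rho> \<le> sum l E"
proof (cases y)
  case (Vert u)
  then have "b = 0" using assms by simp
  then show ?thesis
    using ball_segment_zero unfolding ball_segments_def segments_below_def
    by (intro exI[of _ "\<lambda>_. 0"]) auto
next
  case (Inner e0 s)
  then have e0: "e0 \<in> E" "0 < s" "s < len e0" using centre by (auto simp: points_def)
  have "ball_segment e0 (min b \<rho>)"
  proof (cases "v = src e0 \<and> b = s")
    case True
    then show ?thesis using Inner e0 radius by (intro ball_segment_near_centre[of e0 s "s - min b \<rho>"]) auto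
  next
    case False
    then have "b = len e0 - s" using assms Inner by auto
    then show ?thesis using Inner e0 radius by (intro ball_segment_near_centre[of e0 s s]) auto
  qed
  moreover have "on_centre_edge e0" unfolding on_centre_edge_def using Inner by blast
  ultimately show ?thesis
    using ball_segment_zero e0(1) unfolding ball_segments_def segments_below_def
    by (intro exI[of _ "\<lambda>e. if e = e0 then min b \<rho> else 0"]) (auto simp: sum.delta finite_edges)
qed

lemma segments_below_mono: "segments_below c l \<Longrightarrow> dy c \<le> dy v \<Longrightarrow> segments_below v l"
  unfolding segments_below_def by fastforce

lemma segments_below_fun_upd:
  assumes "segments_below c l" "e \<in> E" "joins src tgt e c v" "dy v = len e + dy c"
  shows "segments_below v (l(e := m))"
proof -
  have "segments_below v l" using segments_below_mono[OF assms(1)] assms(4) edge_wf[OF assms(2)] by simp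
  then show ?thesis using assms(3,4) unfolding segments_below_def by (auto simp: add.commute)
qed

lemma segments_below_unused:
  assumes "segments_below c l" "e \<in> E" "joins src tgt e v c" "dy v = len e + dy c"
  shows "\<not> 0 < l e"
proof
  assume "0 < l e"
  then consider s where "y = Inner e s" | u u' where "joins src tgt e u u'" "dy u + len e \<le> dy c"
    using assms(1,2) unfolding segments_below_def on_centre_edge_def by blast
  then show False
  proof cases
    case 1
    then show False using dy_lt_across_centre_edge assms(3,4) by fastforce
  next
    case 2
    then have "u = v \<or> u = c" using assms(3) by (auto simp: joins_def)
    then show False using 2 assms(4) edge_wf[OF assms(2)] by auto
  qed
qed

lemma ball_segments_step:
  assumes e: "e \<in> E" "joins src tgt e v c" "dy v = len e + dy c"
    and l: "ball_segments l" "segments_below c l" "min (dy c) \<rho> \<le> sum l E"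
  shows "\<exists>l'. ball_segments l' \<and> segments_below v l' \<and> min (dy v) \<rho> \<le> sum l' E"
proof (cases "\<rho> \<le> dy c")
  case True
  then show ?thesis
    using l segments_below_mono[OF l(2)] e(3) edge_wf[OF e(1)] by (intro exI[of _ l]) auto
next
  case False
  define m where "m = min (len e) (\<rho> - dy c)"
  have "l e = 0"
    using segments_below_unused[OF l(2) e] l(1) e(1) by (auto simp: ball_segments_def ball_segment_def)
  moreover have "joins src tgt e c v" using e(2) by (auto simp: joins_def)
  moreover have "0 \<le> m" "m \<le> len e" "dy c + m \<le> \<rho>"
    using False edge_wf[OF e(1)] by (auto simp: m_def)
  ultimately have "ball_segments (l(e := m))" "sum (l(e := m)) E = sum l E + m"
    using ball_segments_extend[OF l(1)] e(1) by auto
  moreover have "min (dy v) \<rho> \<le> sum l E + m"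
    using l(3) e(3) False by (auto simp: m_def)
  ultimately show ?thesis
    using segments_below_fun_upd[OF l(2) e(1) \<open>joins src tgt e c v\<close> e(3)] by (intro exI[of _ "l(e := m)"]) auto
qed

lemma ball_segments_vertex:
  "v \<in> V \<Longrightarrow> \<exists>l. ball_segments l \<and> segments_below v l \<and> min (dy v) \<rho> \<le> sum l E"
proof (induction v rule: measure_induct_rule[where f = "\<lambda>v. card {w\<in>V. dy w < dy v}"])
  case (less v)
  from less.prems show ?case
  proof (cases rule: dy_cases)
    case (1 b)
    then show ?thesis using ball_segments_centre_end[OF 1(1)] by simp
  next
    case (2 e c)
    have "c \<in> V" using joins_vertices[OF 2(1,2)] by simp
    have "dy c < dy v" using 2(3) edge_wf[OF 2(1)] by simp
    then have "{w\<in>V. dy w < dy c} \<subset> {w\<in>V. dy w < dy v}"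
      using \<open>c \<in> V\<close> by auto
    then have "card {w\<in>V. dy w < dy c} < card {w\<in>V. dy w < dy v}"
      using finite_vertices by (intro psubset_card_mono) auto
    then obtain l where "ball_segments l" "segments_below c l" "min (dy c) \<rho> \<le> sum l E"
      using less.IH \<open>c \<in> V\<close> by blast
    then show ?thesis by (rule ball_segments_step[OF 2])
  qed
qed

lemma ball_segments_on_centre_edge:
  assumes "y = Inner e s" "closed_point (Inner e t)" "\<rho> \<le> d (Inner e t) y"
  shows "\<exists>l. ball_segments l \<and> \<rho> \<le> sum l E"
proof -
  have e: "e \<in> E" "0 \<le> t" "t \<le> len e"
    using assms(2) by (auto simp: closed_point_def)
  have "0 < s" "s < len e" using centre assms(1) by (auto simp: points_def)
  have "\<rho> \<le> \<bar>t - s\<bar>" using assms(1,3) pdist_le_same_edge[of e t s] by simp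
  then have "ball_segment e \<rho>"
    using e radius \<open>0 < s\<close> \<open>s < len e\<close> ball_segment_near_centre[OF assms(1), of s \<rho>]
      ball_segment_near_centre[OF assms(1), of "s - \<rho>" \<rho>]
    by (cases "s < t") auto
  then show ?thesis
    using ball_segment_zero e(1) unfolding ball_segments_def
    by (intro exI[of _ "\<lambda>e'. if e' = e then \<rho> else 0"]) (auto simp: sum.delta finite_edges)
qed

lemma ball_segments_off_centre_edge:
  assumes z: "z = Inner e t" "closed_point z" and w: "(w, b) \<in> ends src tgt len z"
    and "\<not> on_centre_edge e" "dy w < \<rho>" "\<rho> \<le> d z y"
  shows "\<exists>l. ball_segments l \<and> \<rho> \<le> sum l E"
proof -
  have e: "e \<in> E" "0 \<le> t" "t \<le> len e" "0 < len e"
    using z edge_wf by (auto simp: closed_point_def)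
  have "w = src e \<and> b = t \<or> w = tgt e \<and> b = len e - t" using z(1) w by auto
  then obtain w' where w': "joins src tgt e w w'" "(w', len e - b) \<in> ends src tgt len z"
    using z(1) edge_wf[OF e(1)] by (auto simp: joins_def)
  have b: "0 \<le> b" "b \<le> len e" using z(1) w e by auto
  obtain l where l: "ball_segments l" "segments_below w l" "min (dy w) \<rho> \<le> sum l E"
    using ball_segments_vertex closed_point_ends[OF z(2) w] by blast
  have "\<not> 0 < l e"
  proof
    assume "0 < l e"
    then obtain u u' where u: "joins src tgt e u u'" "dy u + len e \<le> dy w"
      using l(2) e(1) assms(4) unfolding segments_below_def by blast
    then have "u = w'" using w'(1) e(4) by (auto simp: joins_def)
    then show False
      using pdist_end_le[OF w'(2) z(2)] u(2) b assms(5,6) by simp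
  qed
  then have "l e = 0" using l(1) e(1) by (auto simp: ball_segments_def ball_segment_def)
  have "\<rho> \<le> b + dy w" using pdist_end_le[OF w z(2)] assms(6) by simp
  then have "ball_segments (l(e := \<rho> - dy w)) \<and> sum (l(e := \<rho> - dy w)) E = sum l E + (\<rho> - dy w)"
    using ball_segments_extend[OF l(1) \<open>l e = 0\<close> e(1) w'(1)] assms(5) b by simp
  then show ?thesis using l(3) assms(5) by (intro exI[of _ "l(e := \<rho> - dy w)"]) simp
qed

lemma ball_segments_far:
  assumes "closed_point z" "\<rho> \<le> d z y"
  shows "\<exists>l. ball_segments l \<and> \<rho> \<le> sum l E"
proof -
  obtain w b where wb: "(w, b) \<in> ends src tgt len z"
    using ends_nonempty[of z] by auto
  have w: "w \<in> V" using closed_point_ends[OF assms(1) wb] by simp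
  show ?thesis
  proof (cases "\<rho> \<le> dy w")
    case True
    then show ?thesis using ball_segments_vertex[OF w] by (metis min.absorb2)
  next
    case False
    have "d z y \<le> b + dy w" using pdist_end_le[OF wb assms(1)] .
    then obtain e t where z: "z = Inner e t"
      using wb assms(2) False by (cases z) auto
    show ?thesis
    proof (cases "on_centre_edge e")
      case True
      then show ?thesis
        using ball_segments_on_centre_edge assms z unfolding on_centre_edge_def by blast
    next
      case off: False
      show ?thesis
        using ball_segments_off_centre_edge[OF z assms(1) wb off] False assms(2) by simp
    qed
  qed
qed

end

lemma ex_le_average:
  fixes f :: "'a \<Rightarrow> real"
  assumes "finite A" "A \<noteq> {}"
  shows "\<exists>a\<in>A. f a \<le> sum f A / card A"
proof (rule ccontr)
  assume "\<not> ?thesis"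
  then have "(\<Sum>a\<in>A. sum f A / card A) < sum f A"
    using assms by (intro sum_strict_mono_ex1[THEN less_le_trans, of _ _ f]) (auto simp: not_le)
  then show False using assms by simp
qed

lemma interval_integral_eq_indicator:
  "0 \<le> (L::real) \<Longrightarrow> (LBINT t=0..L. f t) = (LINT t|lborel. indicator {0<..<L} t * (f t :: real))"
  by (simp add: interval_lebesgue_integral_def set_lebesgue_integral_def zero_ereal_def)

lemma integral_ge_segment_length:
  fixes f :: "real \<Rightarrow> real"
  assumes int: "integrable lborel (\<lambda>t. indicator {0<..<L} t * f t)"
    and nonneg: "\<And>t. 0 \<le> f t" and seg: "0 \<le> a" "0 \<le> l" "a + l \<le> L"
    and one: "\<And>t. a < t \<Longrightarrow> t < a + l \<Longrightarrow> f t = 1"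
  shows "l \<le> (LINT t|lborel. indicator {0<..<L} t * f t)"
proof -
  have "(LINT t|lborel. indicator {a<..<a + l} t :: real) \<le> (LINT t|lborel. indicator {0<..<L} t * f t)"
  proof (rule integral_mono[OF _ int])
    show "integrable lborel (indicator {a<..<a + l} :: real \<Rightarrow> real)"
      by (rule integrable_real_indicator) (use seg in auto)
    show "indicator {a<..<a + l} t \<le> indicator {0<..<L} t * f t" for t
      using one nonneg seg by (cases "a < t \<and> t < a + l") (auto simp: indicator_def)
  qed
  then show ?thesis using seg by simp
qed

subsection \<open>Shares and payoffs\<close>

locale location_profile = metric_network V E src tgt len
  for V :: "'v set" and E :: "'e set" and src tgt :: "'e \<Rightarrow> 'v" and len :: "'e \<Rightarrow> real" +
  fixes n :: nat and x :: "nat \<Rightarrow> ('v, 'e) point"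
  assumes players: "1 \<le> n" and located: "\<And>i. i \<in> {1..n} \<Longrightarrow> x i \<in> points V E len"
begin

abbreviation "closest_to \<equiv> closest E src tgt len n x"
abbreviation "share_of \<equiv> share E src tgt len n x"

lemma closest_subset: "closest_to p \<subseteq> x ` {1..n}"
  unfolding closest_def by auto

lemma finite_closest: "finite (closest_to p)"
  using finite_subset[OF closest_subset] by simp

lemma closest_nonempty: "closest_to p \<noteq> {}"
proof -
  have "d p ` x ` {1..n} \<noteq> {}" using players by auto
  then have "Min (d p ` x ` {1..n}) \<in> d p ` x ` {1..n}" by (intro Min_in) auto
  then obtain l where "l \<in> x ` {1..n}" "d p l = Min (d p ` x ` {1..n})" by (metis imageE)
  then have "l \<in> closest_to p" unfolding closest_def by auto
  then show ?thesis by auto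
qed

lemma share_nonneg: "0 \<le> share_of i p"
  unfolding share_def by simp

lemma share_le_1: "share_of i p \<le> 1"
proof -
  have "1 / (real a * real b) \<le> 1" for a b :: nat
    by (cases "a = 0 \<or> b = 0") (auto simp: Suc_le_eq simp flip: of_nat_mult)
  then show ?thesis unfolding share_def by simp
qed

lemma sum_share: "(\<Sum>i\<in>{1..n}. share_of i p) = 1"
proof -
  let ?C = "closest_to p" and ?G = "\<lambda>l. {j \<in> {1..n}. x j = l}"
  have "card ?C \<noteq> 0" using closest_nonempty finite_closest by simp
  have location: "(\<Sum>i\<in>?G l. share_of i p) = (if l \<in> ?C then 1 / card ?C else 0)"
    if "l \<in> x ` {1..n}" for l
  proof -
    have "card (?G l) \<noteq> 0" using that by auto
    have "(\<Sum>i\<in>?G l. share_of i p) = (\<Sum>i\<in>?G l. if l \<in> ?C then 1 / (card ?C * card (?G l)) else 0)"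
      by (rule sum.cong) (auto simp: share_def)
    also have "\<dots> = (if l \<in> ?C then 1 / card ?C else 0)" using \<open>card (?G l) \<noteq> 0\<close> by simp
    finally show ?thesis .
  qed
  have "(\<Sum>i\<in>{1..n}. share_of i p) = (\<Sum>l\<in>x ` {1..n}. \<Sum>i\<in>?G l. share_of i p)"
    by (rule sum.image_gen) simp
  also have "\<dots> = (\<Sum>l\<in>x ` {1..n}. if l \<in> ?C then 1 / card ?C else 0)"
    using location by simp
  also have "\<dots> = (\<Sum>l\<in>?C. 1 / card ?C)"
    using closest_subset by (simp add: sum.If_cases Int_absorb1)
  also have "\<dots> = 1" using \<open>card ?C \<noteq> 0\<close> by simp
  finally show ?thesis .
qed

lemma share_eq_1_if_strictly_closest:
  assumes "i \<in> {1..n}" "\<And>k. k \<in> {1..n} \<Longrightarrow> k \<noteq> i \<Longrightarrow> d p (x i) < d p (x k)"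
  shows "share_of i p = 1"
proof -
  have le: "d p (x i) \<le> d p (x k)" if "k \<in> {1..n}" for k
    using assms(2)[OF that] by (cases "k = i") auto
  have "closest_to p = {x i}"
  proof
    show "closest_to p \<subseteq> {x i}"
    proof
      fix l assume "l \<in> closest_to p"
      then obtain k where "k \<in> {1..n}" "l = x k" "d p (x k) \<le> d p (x i)"
        using assms(1) unfolding closest_def by auto
      then show "l \<in> {x i}" using assms(2) by (cases "k = i") (auto simp: not_less[symmetric])
    qed
    show "{x i} \<subseteq> closest_to p" using assms(1) le unfolding closest_def by auto
  qed
  moreover have "x k \<noteq> x i" if "k \<in> {1..n}" "k \<noteq> i" for k
    using assms(2)[OF that] by auto
  then have "{j \<in> {1..n}. x j = x i} = {i}" using assms(1) by auto
  ultimately show ?thesis unfolding share_def by simp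
qed

lemma share_along_edge_measurable:
  assumes "i \<in> {1..n}" "e \<in> E"
  shows "(\<lambda>t. share_of i (Inner e (clamp 0 (len e) t))) \<in> borel_measurable borel"
proof -
  define dl where "dl l t = d (Inner e (clamp 0 (len e) t)) l" for l t
  have dl_measurable [measurable]: "dl l \<in> borel_measurable borel" if "l \<in> x ` {1..n}" for l
    using pdist_along_edge_measurable[OF _ assms(2)] that located closed_point_points
    unfolding dl_def by auto
  define mu where "mu t = Min ((\<lambda>l. dl l t) ` x ` {1..n})" for t
  have [measurable]: "mu \<in> borel_measurable borel"
    unfolding mu_def by (rule borel_measurable_Min) auto
  have closest_eq: "closest_to (Inner e (clamp 0 (len e) t)) = {l \<in> x ` {1..n}. dl l t \<le> mu t}" for t
    using players unfolding closest_def mu_def dl_def by (auto simp: Min_ge_iff)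
  define count where "count t = (\<Sum>l\<in>x ` {1..n}. if dl l t \<le> mu t then 1 else (0::real))" for t
  have [measurable]: "count \<in> borel_measurable borel"
    unfolding count_def by (rule borel_measurable_sum) measurable
  have card_closest: "real (card (closest_to (Inner e (clamp 0 (len e) t)))) = count t" for t
    unfolding closest_eq count_def by (simp flip: sum.inter_filter)
  define c where "c = real (card {j \<in> {1..n}. x j = x i})"
  have share_eq: "share_of i (Inner e (clamp 0 (len e) t)) =
      (if dl (x i) t \<le> mu t then 1 / (count t * c) else 0)" for t
    using card_closest assms(1) unfolding share_def closest_eq c_def by auto
  have [measurable]: "dl (x i) \<in> borel_measurable borel"
    using assms(1) by (intro dl_measurable) simp
  have "(\<lambda>t. if dl (x i) t \<le> mu t then 1 / (count t * c) else 0) \<in> borel_measurable borel"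
    by measurable
  then show ?thesis by (simp only: share_eq)
qed

lemma integrable_share_along_edge:
  assumes "i \<in> {1..n}" "e \<in> E"
  shows "integrable lborel (\<lambda>t. indicator {0<..<len e} t * share_of i (Inner e t))"
proof -
  have "integrable lborel (\<lambda>t. indicator {0<..<len e} t *\<^sub>R share_of i (Inner e (clamp 0 (len e) t)))"
    using share_along_edge_measurable[OF assms] share_nonneg share_le_1 edge_wf[OF assms(2)]
    by (intro integrableI_bounded_set_indicator[where B=1]) (auto simp: less_imp_le)
  moreover have "(\<lambda>t. indicator {0<..<len e} t *\<^sub>R share_of i (Inner e (clamp 0 (len e) t))) =
      (\<lambda>t. indicator {0<..<len e} t * share_of i (Inner e t))"
    by (rule ext) (auto simp: indicator_def cbox_interval)
  ultimately show ?thesis by simp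
qed

lemma payoff_eq_integral: "payoff E src tgt len n x i =
    (\<Sum>e\<in>E. LINT t|lborel. indicator {0<..<len e} t * share_of i (Inner e t))"
  unfolding payoff_def
  by (rule sum.cong) (use edge_wf in \<open>auto simp: interval_integral_eq_indicator less_imp_le\<close>)

lemma sum_payoff: "(\<Sum>i\<in>{1..n}. payoff E src tgt len n x i) = total_length E len"
proof -
  have "(\<Sum>i\<in>{1..n}. LINT t|lborel. indicator {0<..<len e} t * share_of i (Inner e t)) = len e"
    if e: "e \<in> E" for e
  proof -
    have "(\<Sum>i\<in>{1..n}. LINT t|lborel. indicator {0<..<len e} t * share_of i (Inner e t)) =
        (LINT t|lborel. (\<Sum>i\<in>{1..n}. indicator {0<..<len e} t * share_of i (Inner e t)))"
      by (rule Bochner_Integration.integral_sum[symmetric, where I = "{1..n}"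
          and f = "\<lambda>i t. indicator {0<..<len e} t * share_of i (Inner e t)"])
         (rule integrable_share_along_edge[OF _ e])
    also have "(\<lambda>t. \<Sum>i\<in>{1..n}. indicator {0<..<len e} t * share_of i (Inner e t)) =
        indicator {0<..<len e}"
      by (rule ext) (simp only: sum_share mult_1_right flip: sum_distrib_left)
    also have "(LINT t|lborel. indicator {0<..<len e} t :: real) = len e" using edge_wf[OF e] by simp
    finally show ?thesis .
  qed
  then show ?thesis
    unfolding payoff_eq_integral total_length_def by (subst sum.swap) simp
qed

lemma ex_payoff_le_average: "\<exists>i\<in>{1..n}. payoff E src tgt len n x i \<le> total_length E len / n"
proof -
  have "\<exists>i\<in>{1..n}. payoff E src tgt len n x i \<le> (\<Sum>j\<in>{1..n}. payoff E src tgt len n x j) / card {1..n}"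
    using players by (intro ex_le_average) auto
  then show ?thesis unfolding sum_payoff by simp
qed

lemma payoff_deviation_ge:
  assumes i: "i \<in> {1..n}" and y: "y \<in> points V E len" and "0 < \<rho>"
    and far: "\<And>k. k \<in> {1..n} \<Longrightarrow> 2 * \<rho> \<le> d (x k) y"
  shows "\<rho> \<le> payoff E src tgt len n (x(i := y)) i"
proof -
  interpret ball: ball_around V E src tgt len y \<rho>
    using y \<open>0 < \<rho>\<close> by unfold_locales
  interpret deviated: location_profile V E src tgt len n "x(i := y)"
    using players located y by unfold_locales auto
  have closed: "closed_point (x k)" if "k \<in> {1..n}" for k
    using located[OF that] closed_point_points by blast
  obtain l where l: "ball.ball_segments l" "\<rho> \<le> sum l E"
    using ball.ball_segments_far[OF closed[OF i]] far[OF i] \<open>0 < \<rho>\<close> by fastforce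
  have share: "deviated.share_of i p = 1" if p: "closed_point p" "d p y < \<rho>" for p
  proof (rule deviated.share_eq_1_if_strictly_closest[OF i])
    fix k assume k: "k \<in> {1..n}" "k \<noteq> i"
    have "d (x k) y \<le> d (x k) p + d p y"
      by (rule pdist_triangle[OF closed[OF k(1)] p(1) ball.centre_closed])
    then show "d p ((x(i := y)) i) < d p ((x(i := y)) k)"
      using far[OF k(1)] p(2) k(2) pdist_commute[of p "x k"] by simp
  qed
  have "l e \<le> (LINT t|lborel. indicator {0<..<len e} t * deviated.share_of i (Inner e t))"
    if e: "e \<in> E" for e
  proof -
    obtain a where "0 \<le> l e" "0 \<le> a" "a + l e \<le> len e"
      "\<And>t. a < t \<Longrightarrow> t < a + l e \<Longrightarrow> d (Inner e t) y < \<rho>"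
      using l(1) e unfolding ball.ball_segments_def ball.ball_segment_def by blast
    then show ?thesis
      using share closed_point_Inner[OF e] deviated.share_nonneg
      by (intro integral_ge_segment_length[OF deviated.integrable_share_along_edge[OF i e]]) auto
  qed
  then have "sum l E \<le> payoff E src tgt len n (x(i := y)) i"
    unfolding deviated.payoff_eq_integral by (rule sum_mono)
  with l(2) show ?thesis by simp
qed

end

theorem mainTheorem11:
  fixes V :: "'v set" and E :: "'e set" and src tgt :: "'e \<Rightarrow> 'v" and len :: "'e \<Rightarrow> real"
    and n :: nat and x :: "nat \<Rightarrow> ('v, 'e) point" and y :: "('v, 'e) point"
  assumes "network V E src tgt len"
    and "n \<ge> 1"
    and "nash_eq V E src tgt len n x"
    and "y \<in> points V E len"
  shows "(MIN i\<in>{1..n}. pdist E src tgt len (x i) y) \<le> 2 * total_length E len / real n"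
proof (rule ccontr)
  assume contra: "\<not> ?thesis"
  interpret metric_network V E src tgt len
    using assms(1) by unfold_locales
  interpret location_profile V E src tgt len n x
    using assms(2,3) by unfold_locales (auto simp: nash_eq_def)
  define \<rho> where "\<rho> = (MIN i\<in>{1..n}. d (x i) y) / 2"
  have far: "2 * \<rho> \<le> d (x k) y" if "k \<in> {1..n}" for k
    unfolding \<rho>_def using that by simp
  have "total_length E len / n < \<rho>"
    using contra times_divide_eq_right[of 2 "total_length E len" n] unfolding \<rho>_def by linarith
  moreover have "0 \<le> total_length E len / n"
    using total_length_nonneg by simp
  moreover obtain i where i: "i \<in> {1..n}" "payoff E src tgt len n x i \<le> total_length E len / n"
    using ex_payoff_le_average by blast
  ultimately have "payoff E src tgt len n x i < payoff E src tgt len n (x(i := y)) i"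
    using payoff_deviation_ge[OF i(1) assms(4) _ far] by (smt (verit))
  then show False
    using assms(3,4) i(1) unfolding nash_eq_def by fastforce
qed

end
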